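(* Under Strategy 2A (described in the context), let $V(\omega)$ be the number of uncles created during the attack cycle $\omega$ that are referred by nephew blocks in an attack cycle strictly after $\omega$. Then $$\mathbb{E}[V]=pq^2\cdot\frac{1-(pq)^{n_1-1}}{1-pq}.$$
   Context: Honest hashrate $p$, attacker hashrate $q$, $p+q=1$, $0<q<p$; $\gamma\in[0,1]$ is the fraction of honest hashrate mining on the attacker's block during a public competition between equal-height blocks. Attack cycles are i.i.d. words in S (attacker block) and H (honest block): H, SHS, SHH, or SSwH with $w$ a Dyck word; $\mathbb{P}[H]=p$, $\mathbb{P}[SHS]=pq^2$, $\mathbb{P}[SHH]=p^2q$, $\mathbb{P}[SSwH]=q^2p(pq)^{|w|}$ ($|w|$ half the length of $w$). Ethereum rules: an uncle is a non-official block whose parent is official; a nephew (official block) may refer an uncle at distance (height difference) at most $n_1$ ($n_1\ge2$ an integer). Strategy 2A ("brutal fork"): the attacker keeps his whole fork secret and releases it all at once at the end of the attack cycle, when an honest block would reduce his advance to one block (after a single attacker block, he publishes it to compete with the honest block); the attacker's fork wins in cycles starting with SS; all miners refer all possible uncles. *)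

theory Defs
  imports "HOL-Analysis.Analysis"
begin

text \<open>Attack cycles are words over {S, H}; we encode S (attacker block) as True
and H (honest block) as False.  Positions in the word are the blocks of the cycle,
in the order in which they are mined.  Heights are relative to the last official
block before the cycle (the base block, height 0).\<close>

fun dyck_aux :: "nat \<Rightarrow> bool list \<Rightarrow> bool" where
  "dyck_aux n [] = (n = 0)"
| "dyck_aux n (True # w) = dyck_aux (Suc n) w"
| "dyck_aux 0 (False # w) = False"
| "dyck_aux (Suc n) (False # w) = dyck_aux n w"

definition dyck :: "bool list \<Rightarrow> bool" where
  "dyck w = dyck_aux 0 w"

definition attack_cycles :: "bool list set" where
  "attack_cycles = {[False], [True, False, True], [True, False, False]}
     \<union> {[True, True] @ w @ [False] | w. dyck w}"

text \<open>Probability of a cycle; for SSwH, |w| is half the length of w.\<close>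
definition cycle_prob :: "real \<Rightarrow> real \<Rightarrow> bool list \<Rightarrow> real" where
  "cycle_prob p q \<omega> =
     (if \<omega> = [False] then p
      else if \<omega> = [True, False, True] then p * q^2
      else if \<omega> = [True, False, False] then p^2 * q
      else if (\<exists>w. dyck w \<and> \<omega> = [True, True] @ w @ [False])
        then q^2 * p * (p * q) ^ ((length \<omega> - 3) div 2)
      else 0)"

definition attacker_wins :: "bool list \<Rightarrow> bool" where
  "attacker_wins \<omega> = (take 2 \<omega> = [True, True] \<or> \<omega> = [True, False, True])"

definition official :: "bool list \<Rightarrow> nat \<Rightarrow> bool" where
  "official \<omega> i = (\<omega> ! i = attacker_wins \<omega>)"

text \<open>Parent of block i: each party mines on its own chain during the cycle
(honest miners on the public chain, the attacker on his secret fork), so the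
parent is the last earlier block of the same party, or the base block (None).
In cycle SHH the second honest block is taken to be mined on the first honest
block; if instead it is mined on the attacker's block, the numbers of uncles
and of their referrals inside the cycle are the same.\<close>
definition parent :: "bool list \<Rightarrow> nat \<Rightarrow> nat option" where
  "parent \<omega> i = (if \<exists>j<i. \<omega> ! j = \<omega> ! i
                  then Some (GREATEST j. j < i \<and> \<omega> ! j = \<omega> ! i) else None)"

definition height :: "bool list \<Rightarrow> nat \<Rightarrow> nat" where
  "height \<omega> i = length (filter (\<lambda>b. b = \<omega> ! i) (take (Suc i) \<omega>))"

definition parent_official :: "bool list \<Rightarrow> nat \<Rightarrow> bool" where
  "parent_official \<omega> i = (case parent \<omega> i of None \<Rightarrow> True | Some j \<Rightarrow> official \<omega> j)"

definition uncle :: "bool list \<Rightarrow> nat \<Rightarrow> bool" where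
  "uncle \<omega> i = (\<not> official \<omega> i \<and> parent_official \<omega> i)"

text \<open>Block i is known to the miner of block j (j > i): the attacker knows all blocks,
honest blocks are public, and under Strategy 2A an attacker block is published
before the end of the cycle only in cycles starting with SH (the first block,
published when the honest block is found).\<close>
definition visible :: "bool list \<Rightarrow> nat \<Rightarrow> nat \<Rightarrow> bool" where
  "visible \<omega> i j = (\<omega> ! j \<or> \<not> \<omega> ! i \<or> (i = 0 \<and> \<omega> ! 1 = False \<and> 2 \<le> j))"

text \<open>Uncle i is referred by an official (nephew) block of the same cycle,
mined after it, at distance between 1 and n1 (all miners refer all possible uncles).\<close>
definition referred_within :: "nat \<Rightarrow> bool list \<Rightarrow> nat \<Rightarrow> bool" where
  "referred_within n1 \<omega> i =
     (\<exists>j<length \<omega>. i < j \<and> official \<omega> j \<and> visible \<omega> i j \<and>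
        height \<omega> i < height \<omega> j \<and> height \<omega> j \<le> height \<omega> i + n1)"

text \<open>Height of the first official block after the cycle (the next cycle's
first official block); later cycles provide official blocks at every height
from this one on, all of which refer all possible uncles.\<close>
definition next_official_height :: "bool list \<Rightarrow> nat" where
  "next_official_height \<omega> = card {i. i < length \<omega> \<and> official \<omega> i} + 1"

text \<open>V(\<omega>): uncles created in cycle \<omega> that are referred by a nephew in a later
cycle, i.e. not referred inside \<omega> and some later official block is within
distance n1.\<close>
definition V :: "nat \<Rightarrow> bool list \<Rightarrow> nat" where
  "V n1 \<omega> = card {i. i < length \<omega> \<and> uncle \<omega> i \<and> \<not> referred_within n1 \<omega> i \<and>
      (\<exists>h. next_official_height \<omega> \<le> h \<and> height \<omega> i < h \<and> h \<le> height \<omega> i + n1)}"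

end

theory Submission
  imports Defs
begin

(* In the cycles H, SHS and SHH every uncle is referred inside the cycle, so V = 0.
   In a cycle won by the attacker the only possible uncle is the first honest block,
   at height 1, and every attacker block after it is official; one of height at most n1
   would refer it.  So an uncle counted by V forces the cycle to be S^i H^m with
   i \<le> n1, and the Dyck condition gives m = i - 1: the cycle is S^(k+2) H^(k+1)
   with k + 2 \<le> n1, where V = 1.  Its probability is q^2 p (pq)^k, and summing over
   k < n1 - 1 gives the geometric sum. *)

lemma dyck_aux_replicate_True: "dyck_aux n (replicate a True @ xs) = dyck_aux (n + a) xs"
  by (induction a arbitrary: n) auto

lemma dyck_aux_replicate_False: "dyck_aux n (replicate b False) \<longleftrightarrow> n = b"
  by (induction b arbitrary: n) (auto elim: dyck_aux.elims)

lemma dyck_replicate: "dyck (replicate a True @ replicate b False) \<longleftrightarrow> a = b"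
  by (simp add: dyck_def dyck_aux_replicate_True dyck_aux_replicate_False)

lemma dyck_cycle_eq_replicate:
  assumes "dyck w" and "True # True # w @ [False] = replicate a True @ replicate b False"
  shows "a = b + 1"
proof -
  have a_ge: "2 \<le> a"
  proof (rule ccontr)
    assume "\<not> 2 \<le> a"
    then have "a = 0 \<or> a = 1" by auto
    then show False using assms(2) by (auto simp: Cons_replicate_eq)
  qed
  moreover have "1 \<le> b"
  proof (rule ccontr)
    assume "\<not> 1 \<le> b"
    then have "last (True # True # w @ [False]) = last (replicate a True)" using assms(2) by simp
    then show False using a_ge by simp
  qed
  ultimately obtain a' b' where a: "a = Suc (Suc a')" and b: "b = Suc b'"
    by (metis Suc_le_D add_2_eq_Suc le_Suc_ex One_nat_def)
  have "w @ [False] = replicate a' True @ replicate b' False @ [False]"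
    using assms(2) by (simp add: a b replicate_append_same)
  then have "w = replicate a' True @ replicate b' False" by simp
  with assms(1) dyck_replicate show ?thesis by (simp add: a b)
qed

definition counted_uncle :: "nat \<Rightarrow> bool list \<Rightarrow> nat \<Rightarrow> bool" where
  "counted_uncle n1 \<omega> i \<longleftrightarrow>
     i < length \<omega> \<and> uncle \<omega> i \<and> \<not> referred_within n1 \<omega> i \<and>
      (\<exists>h. next_official_height \<omega> \<le> h \<and> height \<omega> i < h \<and> h \<le> height \<omega> i + n1)"

lemma V_eq_card_counted_uncle: "V n1 \<omega> = card {i. counted_uncle n1 \<omega> i}"
  by (simp add: V_def counted_uncle_def)

lemma V_eq_0_if_uncles_referred:
  assumes "\<And>i. i < length \<omega> \<Longrightarrow> uncle \<omega> i \<Longrightarrow> referred_within n1 \<omega> i"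
  shows "V n1 \<omega> = 0"
  using assms by (auto simp: V_eq_card_counted_uncle counted_uncle_def)

lemma V_H: "V n1 [False] = 0"
  by (rule V_eq_0_if_uncles_referred) (simp add: uncle_def official_def attacker_wins_def)

lemma V_SHS: assumes "1 \<le> n1" shows "V n1 [True, False, True] = 0"
proof (rule V_eq_0_if_uncles_referred)
  fix i assume "i < length [True, False, True]" "uncle [True, False, True] i"
  then have "i = 1" by (auto simp: uncle_def official_def attacker_wins_def less_Suc_eq)
  then show "referred_within n1 [True, False, True] i"
    unfolding referred_within_def using assms
    by (intro exI[of _ 2]) (simp add: official_def attacker_wins_def visible_def height_def)
qed

lemma V_SHH: assumes "1 \<le> n1" shows "V n1 [True, False, False] = 0"
proof (rule V_eq_0_if_uncles_referred)
  fix i assume "i < length [True, False, False]" "uncle [True, False, False] i"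
  then have "i = 0" by (auto simp: uncle_def official_def attacker_wins_def less_Suc_eq)
  then show "referred_within n1 [True, False, False] i"
    unfolding referred_within_def using assms
    by (intro exI[of _ 2]) (simp add: official_def attacker_wins_def visible_def height_def)
qed

lemma official_if_attacker_wins: "attacker_wins \<omega> \<Longrightarrow> official \<omega> i = \<omega> ! i"
  by (simp add: official_def)

lemma uncle_iff_first_honest:
  assumes "attacker_wins \<omega>"
  shows "uncle \<omega> i \<longleftrightarrow> \<not> \<omega> ! i \<and> (\<forall>j<i. \<omega> ! j)"
proof (cases "\<exists>j<i. \<omega> ! j = \<omega> ! i")
  case True
  define g where "g = (GREATEST j. j < i \<and> \<omega> ! j = \<omega> ! i)"
  have "\<omega> ! g = \<omega> ! i"
    using GreatestI_ex_nat[of "\<lambda>j. j < i \<and> \<omega> ! j = \<omega> ! i" i] True by (auto simp: g_def)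
  moreover have "parent \<omega> i = Some g" using True by (simp add: parent_def g_def)
  ultimately show ?thesis
    using True assms by (auto simp: uncle_def parent_official_def official_if_attacker_wins)
next
  case False
  then have "parent \<omega> i = None" by (simp add: parent_def)
  then show ?thesis
    using False assms by (auto simp: uncle_def parent_official_def official_if_attacker_wins)
qed

lemma height_first_honest:
  assumes "i < length \<omega>" "\<not> \<omega> ! i" "\<forall>j<i. \<omega> ! j"
  shows "height \<omega> i = 1"
proof -
  have "filter (\<lambda>b. b = \<omega> ! i) (take i \<omega>) = []"
    using assms by (auto simp: filter_empty_conv in_set_conv_nth)
  then show ?thesis using assms by (simp add: height_def take_Suc_conv_app_nth)
qed

lemma height_attacker_le:
  assumes "\<omega> ! j"
  shows "height \<omega> j \<le> length (filter (\<lambda>b. b) \<omega>)"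
proof -
  have "filter (\<lambda>b. b) \<omega> = filter (\<lambda>b. b) (take (Suc j) \<omega>) @ filter (\<lambda>b. b) (drop (Suc j) \<omega>)"
    by (metis append_take_drop_id filter_append)
  then show ?thesis using assms by (simp add: height_def)
qed

lemma height_attacker_ge: "(True # True # u) ! j \<Longrightarrow> 0 < j \<Longrightarrow> 2 \<le> height (True # True # u) j"
  by (cases j) (auto simp: height_def)

lemma next_official_height_attacker_wins:
  "attacker_wins \<omega> \<Longrightarrow> next_official_height \<omega> = length (filter (\<lambda>b. b) \<omega>) + 1"
  by (simp add: next_official_height_def official_if_attacker_wins length_filter_conv_card)

lemma counted_uncle_shape:
  fixes u :: "bool list"
  defines "\<omega> \<equiv> True # True # u"
  assumes "counted_uncle n1 \<omega> i"
  shows "i \<le> n1 \<and> \<omega> = replicate i True @ replicate (length \<omega> - i) False"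
proof -
  have i: "i < length \<omega>" "uncle \<omega> i" "\<not> referred_within n1 \<omega> i"
    and later: "\<exists>h. next_official_height \<omega> \<le> h \<and> height \<omega> i < h \<and> h \<le> height \<omega> i + n1"
    using assms(2) by (simp_all add: counted_uncle_def)
  have wins: "attacker_wins \<omega>" by (simp add: \<omega>_def attacker_wins_def)
  have honest: "\<not> \<omega> ! i" and attackers_before: "\<forall>j<i. \<omega> ! j"
    using i(2) uncle_iff_first_honest[OF wins] by auto
  have height_i: "height \<omega> i = 1" using height_first_honest[OF i(1) honest attackers_before] .
  have few_attackers: "length (filter (\<lambda>b. b) \<omega>) \<le> n1"
    using later height_i next_official_height_attacker_wins[OF wins] by auto
  have honest_after: "\<not> \<omega> ! j" if "i < j" "j < length \<omega>" for j
  proof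
    assume attacker_j: "\<omega> ! j"
    have "2 \<le> height \<omega> j" using height_attacker_ge attacker_j that by (simp add: \<omega>_def)
    moreover have "height \<omega> j \<le> n1" using height_attacker_le[OF attacker_j] few_attackers by simp
    ultimately have "referred_within n1 \<omega> i"
      unfolding referred_within_def using that attacker_j height_i
      by (intro exI[of _ j]) (auto simp: official_if_attacker_wins[OF wins] visible_def)
    with i(3) show False by simp
  qed
  have shape: "\<omega> = replicate i True @ replicate (length \<omega> - i) False"
    using i(1) attackers_before honest honest_after
    by (intro nth_equalityI) (auto simp: nth_append, metis linorder_neqE_nat)
  have "length (filter (\<lambda>b. b) (replicate i True @ replicate (length \<omega> - i) False)) = i"
    by simp
  with shape few_attackers show ?thesis by simp
qed

definition balanced_cycle :: "nat \<Rightarrow> bool list" where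
  "balanced_cycle k = replicate (k + 2) True @ replicate (k + 1) False"

lemma balanced_cycle_in_attack_cycles: "balanced_cycle k \<in> attack_cycles"
proof -
  have "balanced_cycle k = [True, True] @ (replicate k True @ replicate k False) @ [False]"
    by (simp add: balanced_cycle_def replicate_append_same)
  then show ?thesis using dyck_replicate[of k k] by (auto simp: attack_cycles_def)
qed

lemma cycle_prob_balanced_cycle: "cycle_prob p q (balanced_cycle k) = q^2 * p * (p * q) ^ k"
proof -
  have "balanced_cycle k = [True, True] @ (replicate k True @ replicate k False) @ [False]"
    by (simp add: balanced_cycle_def replicate_append_same)
  then show ?thesis
    using dyck_replicate[of k k] by (auto simp: cycle_prob_def balanced_cycle_def)
qed

lemma inj_balanced_cycle: "inj balanced_cycle"
proof (rule injI)
  fix k l assume "balanced_cycle k = balanced_cycle l"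
  then have "length (balanced_cycle k) = length (balanced_cycle l)" by simp
  then show "k = l" by (simp add: balanced_cycle_def)
qed

lemma nth_replicate_append:
  "j < a + b \<Longrightarrow> (replicate a x @ replicate b y) ! j = (if j < a then x else y)"
  by (simp add: nth_append)

lemma V_balanced_cycle: "V n1 (balanced_cycle k) = (if k + 2 \<le> n1 then 1 else 0)"
proof -
  define \<omega> where "\<omega> = balanced_cycle k"
  have wins: "attacker_wins \<omega>" by (simp add: \<omega>_def balanced_cycle_def attacker_wins_def)
  have nth: "\<omega> ! j \<longleftrightarrow> j < k + 2" if "j < length \<omega>" for j
    using that nth_replicate_append[of j "k + 2" "k + 1" True False]
    by (simp add: \<omega>_def balanced_cycle_def)
  have len: "length \<omega> = 2 * k + 3" by (simp add: \<omega>_def balanced_cycle_def)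
  have uncle: "i < length \<omega> \<and> uncle \<omega> i \<longleftrightarrow> i = k + 2" for i
    using nth len by (auto simp: uncle_iff_first_honest[OF wins]) (metis not_less_iff_gr_or_eq less_irrefl)
  have not_referred: "\<not> referred_within n1 \<omega> (k + 2)"
    using nth by (auto simp: referred_within_def official_if_attacker_wins[OF wins])
  have height: "height \<omega> (k + 2) = 1"
    using nth len by (intro height_first_honest) auto
  have next_height: "next_official_height \<omega> = k + 3"
    unfolding next_official_height_attacker_wins[OF wins] by (simp add: \<omega>_def balanced_cycle_def)
  have "counted_uncle n1 \<omega> i \<longleftrightarrow> i = k + 2 \<and> k + 2 \<le> n1" for i
  proof
    assume counted: "counted_uncle n1 \<omega> i"
    then have i: "i = k + 2" using uncle by (auto simp: counted_uncle_def)
    from counted obtain h where "next_official_height \<omega> \<le> h" "h \<le> height \<omega> i + n1"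
      by (auto simp: counted_uncle_def)
    then show "i = k + 2 \<and> k + 2 \<le> n1" unfolding i height next_height by linarith
  next
    assume "i = k + 2 \<and> k + 2 \<le> n1"
    then have i: "i = k + 2" and "k + 2 \<le> n1" by auto
    then show "counted_uncle n1 \<omega> i"
      using uncle[of "k + 2"] not_referred unfolding counted_uncle_def i height next_height
      by (auto intro!: exI[of _ "k + 3"])
  qed
  then show ?thesis by (simp add: V_eq_card_counted_uncle \<omega>_def[symmetric])
qed

lemma V_unbalanced_cycle:
  assumes "dyck w" and "\<And>k. True # True # w @ [False] \<noteq> balanced_cycle k"
  shows "V n1 (True # True # w @ [False]) = 0"
proof -
  have False if "counted_uncle n1 (True # True # w @ [False]) i" for i
  proof -
    define b where "b = length (True # True # w @ [False]) - i"
    have shape: "True # True # w @ [False] = replicate i True @ replicate b False"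
      using counted_uncle_shape[OF that] by (simp add: b_def)
    then have "i = b + 1" using dyck_cycle_eq_replicate[OF assms(1)] by blast
    then have "True # True # w @ [False] = balanced_cycle (b - 1)"
      using shape by (cases b) (auto simp: balanced_cycle_def)
    with assms(2) show False by blast
  qed
  then have "{i. counted_uncle n1 (True # True # w @ [False]) i} = {}" by blast
  then show ?thesis by (simp only: V_eq_card_counted_uncle card.empty)
qed

lemma V_attack_cycle:
  assumes "\<omega> \<in> attack_cycles" and "1 \<le> n1"
  shows "V n1 \<omega> = (if \<omega> \<in> balanced_cycle ` {..<n1 - 1} then 1 else 0)"
proof -
  consider "\<omega> = [False]" | "\<omega> = [True, False, True]" | "\<omega> = [True, False, False]"
    | (SS) w where "dyck w" "\<omega> = True # True # w @ [False]"
    using assms(1) unfolding attack_cycles_def by auto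
  then show ?thesis
  proof cases
    case SS
    show ?thesis
    proof (cases "\<exists>k. \<omega> = balanced_cycle k")
      case True
      then obtain k where "\<omega> = balanced_cycle k" by blast
      moreover have "\<omega> \<in> balanced_cycle ` {..<n1 - 1} \<longleftrightarrow> k + 2 \<le> n1"
        using inj_balanced_cycle by (auto simp: \<open>\<omega> = balanced_cycle k\<close> inj_eq)
      ultimately show ?thesis by (simp add: V_balanced_cycle)
    qed (use SS V_unbalanced_cycle in auto)
  qed (auto simp: V_H V_SHS[OF assms(2)] V_SHH[OF assms(2)] balanced_cycle_def)
qed

lemma geometric_sum_pq:
  fixes p q :: real
  assumes "p + q = 1" "0 < q" "q < p"
  shows "(\<Sum>k<n. q^2 * p * (p * q) ^ k) = p * q^2 * (1 - (p * q) ^ n) / (1 - p * q)"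
proof -
  have "p * q < p * 1" using assms by (intro mult_strict_left_mono) auto
  then have "p * q < 1" using assms by linarith
  then show ?thesis by (simp add: sum_distrib_left[symmetric] sum_gp_strict)
qed

theorem proposition13:
  fixes p q :: real and n1 :: nat
  assumes "p + q = 1" and "0 < q" and "q < p" and "2 \<le> n1"
  shows "((\<lambda>\<omega>. cycle_prob p q \<omega> * real (V n1 \<omega>)) has_sum
            (p * q^2 * (1 - (p * q) ^ (n1 - 1)) / (1 - p * q))) attack_cycles"
proof (rule has_sum_finite_neutralI)
  let ?B = "balanced_cycle ` {..<n1 - 1}"
  have n1: "1 \<le> n1" using assms(4) by simp
  show "finite ?B" and "?B \<subseteq> attack_cycles" using balanced_cycle_in_attack_cycles by auto
  show "cycle_prob p q \<omega> * real (V n1 \<omega>) = 0" if "\<omega> \<in> attack_cycles - ?B" for \<omega>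
    using that V_attack_cycle[OF _ n1] by simp
  have "(\<Sum>\<omega>\<in>?B. cycle_prob p q \<omega> * real (V n1 \<omega>)) = (\<Sum>k<n1 - 1. q^2 * p * (p * q) ^ k)"
    using inj_on_subset[OF inj_balanced_cycle]
    by (simp add: sum.reindex V_attack_cycle[OF balanced_cycle_in_attack_cycles n1]
        cycle_prob_balanced_cycle)
  then show "p * q^2 * (1 - (p * q) ^ (n1 - 1)) / (1 - p * q)
      = (\<Sum>\<omega>\<in>?B. cycle_prob p q \<omega> * real (V n1 \<omega>))"
    using geometric_sum_pq[OF assms(1-3)] by simp
qed

end
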